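(* Let $\alpha\in\mathbb R$ and let $(\mathfrak g_1,\varphi_1,\xi_1,\eta_1,g_1)$ and $(\mathfrak g_2,\varphi_2,\xi_2,\eta_2,g_2)$ be two almost $\alpha$-coK\"ahler Lie algebras with $\mathcal L_{\xi_i}\varphi_i=0$ for $i=1,2$ (in particular, two $K$-cosymplectic Lie algebras). For $i=1,2$ let $\mathfrak h_i=\ker\eta_i$, $J_i=\varphi_i|_{\mathfrak h_i}$, $h_i=g_i|_{\mathfrak h_i\times\mathfrak h_i}$ and $D_i=\mathrm{ad}_{\xi_i}|_{\mathfrak h_i}$. Then $\mathfrak g_1$ and $\mathfrak g_2$ are isomorphic (as almost $\alpha$-coK\"ahler Lie algebras) if and only if there exists an isomorphism $\psi:(\mathfrak h_1,J_1,h_1)\to(\mathfrak h_2,J_2,h_2)$ of almost K\"ahler Lie algebras such that $\psi\circ D_1=D_2\circ\psi$.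
   Context: For a Lie algebra, $d\eta(x,y)=-\eta([x,y])$ and $d\omega(x,y,z)=-\omega([x,y],z)-\omega([y,z],x)-\omega([z,x],y)$. An almost contact metric structure on a $(2n+1)$-dimensional Lie algebra $\mathfrak g$ is $(\varphi,\xi,\eta,g)$ with $\eta(\xi)=1$, $\varphi^2=-I+\eta\otimes\xi$, $\eta\circ\varphi=0$, $g$ positive definite with $g(\varphi x,\varphi y)=g(x,y)-\eta(x)\eta(y)$; $\Phi(x,y)=g(x,\varphi y)$. It is almost $\alpha$-coK\"ahler if $\eta\wedge\Phi^n\neq0$, $d\eta=0$, $d\Phi=2\alpha\,\eta\wedge\Phi$; for $\alpha=0$ it is almost coK\"ahler, and $K$-cosymplectic if moreover $\xi$ is Killing. $\mathcal L_\xi\varphi=\mathrm{ad}_\xi\circ\varphi-\varphi\circ\mathrm{ad}_\xi$. An almost K\"ahler structure on a $2n$-dimensional Lie algebra is $(J,h)$, $J^2=-I$, $h$ positive definite, $h(Jx,Jy)=h(x,y)$, $h(x,Jy)$ closed and nondegenerate. Isomorphism of almost $\alpha$-coK\"ahler Lie algebras: Lie algebra isomorphism $\Psi$ with $\Psi\circ\varphi_1=\varphi_2\circ\Psi$, $\eta_2\circ\Psi=\eta_1$, $\Psi\xi_1=\xi_2$, $\Psi^*g_2=g_1$. Isomorphism of almost K\"ahler Lie algebras: Lie algebra isomorphism $\psi$ with $\psi\circ J_1=J_2\circ\psi$, $\psi^*h_2=h_1$. *)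

theory Defs
  imports "HOL-Analysis.Analysis" "HOL-Combinatorics.Permutations"
begin

text \<open>Real Lie algebras: the underlying space is a finite-dimensional real vector space,
  rendered as a type of class euclidean_space (the euclidean inner product is NOT used;
  the metric g is an arbitrary bilinear form).\<close>

definition lie_algebra :: "('a::real_vector \<Rightarrow> 'a \<Rightarrow> 'a) \<Rightarrow> bool" where
  "lie_algebra br \<longleftrightarrow> bilinear br \<and> (\<forall>x. br x x = 0) \<and>
     (\<forall>x y z. br x (br y z) + br y (br z x) + br z (br x y) = 0)"

definition almost_contact_metric ::
  "('a::real_vector \<Rightarrow> 'a) \<Rightarrow> 'a \<Rightarrow> ('a \<Rightarrow> real) \<Rightarrow> ('a \<Rightarrow> 'a \<Rightarrow> real) \<Rightarrow> bool" where
  "almost_contact_metric \<phi> \<xi> \<eta> g \<longleftrightarrow>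
     linear \<phi> \<and> linear \<eta> \<and> \<eta> \<xi> = 1 \<and>
     (\<forall>x. \<phi> (\<phi> x) = - x + \<eta> x *\<^sub>R \<xi>) \<and>
     (\<forall>x. \<eta> (\<phi> x) = 0) \<and>
     bilinear g \<and> (\<forall>x y. g x y = g y x) \<and> (\<forall>x. x \<noteq> 0 \<longrightarrow> g x x > 0) \<and>
     (\<forall>x y. g (\<phi> x) (\<phi> y) = g x y - \<eta> x * \<eta> y)"

definition fund_form :: "('a \<Rightarrow> 'a \<Rightarrow> real) \<Rightarrow> ('a \<Rightarrow> 'a) \<Rightarrow> 'a \<Rightarrow> 'a \<Rightarrow> real" where
  "fund_form g \<phi> x y = g x (\<phi> y)"

definition d1 :: "('a \<Rightarrow> 'a \<Rightarrow> 'a) \<Rightarrow> ('a \<Rightarrow> real) \<Rightarrow> 'a \<Rightarrow> 'a \<Rightarrow> real" where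
  "d1 br \<eta> x y = - \<eta> (br x y)"

definition d2 :: "('a \<Rightarrow> 'a \<Rightarrow> 'a) \<Rightarrow> ('a \<Rightarrow> 'a \<Rightarrow> real) \<Rightarrow> 'a \<Rightarrow> 'a \<Rightarrow> 'a \<Rightarrow> real" where
  "d2 br \<omega> x y z = - \<omega> (br x y) z - \<omega> (br y z) x - \<omega> (br z x) y"

text \<open>Wedge of a 1-form and a 2-form (determinant convention, consistent with d2).\<close>
definition wedge12 :: "('a \<Rightarrow> real) \<Rightarrow> ('a \<Rightarrow> 'a \<Rightarrow> real) \<Rightarrow> 'a \<Rightarrow> 'a \<Rightarrow> 'a \<Rightarrow> real" where
  "wedge12 \<eta> \<omega> x y z = \<eta> x * \<omega> y z + \<eta> y * \<omega> z x + \<eta> z * \<omega> x y"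

text \<open>eta wedge Phi^n is nonzero: the full alternation of eta (x) Phi (x) ... (x) Phi
  (n copies of Phi), which is a nonzero constant multiple of eta wedge Phi^n, is not
  identically zero.\<close>
definition eta_wedge_Phi_pow_nonzero :: "('a \<Rightarrow> real) \<Rightarrow> ('a \<Rightarrow> 'a \<Rightarrow> real) \<Rightarrow> nat \<Rightarrow> bool" where
  "eta_wedge_Phi_pow_nonzero \<eta> \<Phi> n \<longleftrightarrow>
     (\<exists>v :: nat \<Rightarrow> 'a.
        (\<Sum>\<sigma> | \<sigma> permutes {0..2*n}.
            of_int (sign \<sigma>) * \<eta> (v (\<sigma> 0)) *
            (\<Prod>k<n. \<Phi> (v (\<sigma> (2*k+1))) (v (\<sigma> (2*k+2))))) \<noteq> 0)"

definition almost_alpha_cokahler ::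
  "real \<Rightarrow> nat \<Rightarrow> ('a::euclidean_space \<Rightarrow> 'a \<Rightarrow> 'a) \<Rightarrow> ('a \<Rightarrow> 'a) \<Rightarrow> 'a \<Rightarrow> ('a \<Rightarrow> real)
     \<Rightarrow> ('a \<Rightarrow> 'a \<Rightarrow> real) \<Rightarrow> bool" where
  "almost_alpha_cokahler \<alpha> n br \<phi> \<xi> \<eta> g \<longleftrightarrow>
     lie_algebra br \<and> DIM('a) = 2*n+1 \<and> almost_contact_metric \<phi> \<xi> \<eta> g \<and>
     eta_wedge_Phi_pow_nonzero \<eta> (fund_form g \<phi>) n \<and>
     (\<forall>x y. d1 br \<eta> x y = 0) \<and>
     (\<forall>x y z. d2 br (fund_form g \<phi>) x y z = 2 * \<alpha> * wedge12 \<eta> (fund_form g \<phi>) x y z)"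

definition lie_deriv_phi :: "('a::real_vector \<Rightarrow> 'a \<Rightarrow> 'a) \<Rightarrow> 'a \<Rightarrow> ('a \<Rightarrow> 'a) \<Rightarrow> 'a \<Rightarrow> 'a" where
  "lie_deriv_phi br \<xi> \<phi> x = br \<xi> (\<phi> x) - \<phi> (br \<xi> x)"

definition acok_iso ::
  "('a::real_vector \<Rightarrow> 'a \<Rightarrow> 'a) \<Rightarrow> ('a \<Rightarrow> 'a) \<Rightarrow> 'a \<Rightarrow> ('a \<Rightarrow> real) \<Rightarrow> ('a \<Rightarrow> 'a \<Rightarrow> real) \<Rightarrow>
   ('b::real_vector \<Rightarrow> 'b \<Rightarrow> 'b) \<Rightarrow> ('b \<Rightarrow> 'b) \<Rightarrow> 'b \<Rightarrow> ('b \<Rightarrow> real) \<Rightarrow> ('b \<Rightarrow> 'b \<Rightarrow> real) \<Rightarrow>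
   ('a \<Rightarrow> 'b) \<Rightarrow> bool" where
  "acok_iso br1 \<phi>1 \<xi>1 \<eta>1 g1 br2 \<phi>2 \<xi>2 \<eta>2 g2 \<Psi> \<longleftrightarrow>
     linear \<Psi> \<and> bij \<Psi> \<and>
     (\<forall>x y. \<Psi> (br1 x y) = br2 (\<Psi> x) (\<Psi> y)) \<and>
     (\<forall>x. \<Psi> (\<phi>1 x) = \<phi>2 (\<Psi> x)) \<and>
     (\<forall>x. \<eta>2 (\<Psi> x) = \<eta>1 x) \<and>
     \<Psi> \<xi>1 = \<xi>2 \<and>
     (\<forall>x y. g2 (\<Psi> x) (\<Psi> y) = g1 x y)"

text \<open>Isomorphism of almost Kaehler Lie algebras (H1, J1, h1) and (H2, J2, h2), where
  H_i is a Lie subalgebra (subspace closed under br_i) of the ambient space, J_i and h_i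
  are the restrictions of the given maps to H_i. The map psi only matters on H1.\<close>
definition ak_iso ::
  "('a::real_vector \<Rightarrow> 'a \<Rightarrow> 'a) \<Rightarrow> 'a set \<Rightarrow> ('a \<Rightarrow> 'a) \<Rightarrow> ('a \<Rightarrow> 'a \<Rightarrow> real) \<Rightarrow>
   ('b::real_vector \<Rightarrow> 'b \<Rightarrow> 'b) \<Rightarrow> 'b set \<Rightarrow> ('b \<Rightarrow> 'b) \<Rightarrow> ('b \<Rightarrow> 'b \<Rightarrow> real) \<Rightarrow>
   ('a \<Rightarrow> 'b) \<Rightarrow> bool" where
  "ak_iso br1 H1 J1 h1 br2 H2 J2 h2 \<psi> \<longleftrightarrow>
     (\<forall>x\<in>H1. \<forall>y\<in>H1. \<psi> (x + y) = \<psi> x + \<psi> y) \<and>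
     (\<forall>c. \<forall>x\<in>H1. \<psi> (c *\<^sub>R x) = c *\<^sub>R \<psi> x) \<and>
     bij_betw \<psi> H1 H2 \<and>
     (\<forall>x\<in>H1. \<forall>y\<in>H1. \<psi> (br1 x y) = br2 (\<psi> x) (\<psi> y)) \<and>
     (\<forall>x\<in>H1. \<psi> (J1 x) = J2 (\<psi> x)) \<and>
     (\<forall>x\<in>H1. \<forall>y\<in>H1. h2 (\<psi> x) (\<psi> y) = h1 x y)"

end

theory Submission
  imports Defs
begin

(* An isomorphism Psi of almost alpha-coKaehler Lie algebras maps xi1 to xi2 and ker eta1
   onto ker eta2, so it restricts to an almost Kaehler isomorphism intertwining ad xi1 and
   ad xi2. Conversely, every x splits uniquely as h + eta1(x) xi1 with h in ker eta1, and a
   horizontal isomorphism psi extends by Psi (h + c xi1) = psi h + c xi2. Since d eta1 = 0,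
   all brackets are horizontal, so Psi is a Lie algebra map exactly because psi is one and
   commutes with ad xi; phi and g are preserved because phi xi = 0 and xi is a unit vector
   g-orthogonal to ker eta. *)

lemma almost_contact_metric_phi_xi:
  assumes "almost_contact_metric \<phi> \<xi> \<eta> g"
  shows "\<phi> \<xi> = 0"
proof -
  have l: "linear \<phi>" and e: "\<eta> \<xi> = 1" and pp: "\<And>x. \<phi> (\<phi> x) = - x + \<eta> x *\<^sub>R \<xi>"
    and ep: "\<And>x. \<eta> (\<phi> x) = 0"
    using assms unfolding almost_contact_metric_def by auto
  have "\<phi> (\<phi> \<xi>) = 0" using pp[of \<xi>] e by simp
  hence "\<phi> (\<phi> (\<phi> \<xi>)) = 0" using linear_0[OF l] by simp
  moreover have "\<phi> (\<phi> (\<phi> \<xi>)) = - \<phi> \<xi>" using pp[of "\<phi> \<xi>"] ep[of \<xi>] by simp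
  ultimately show ?thesis by simp
qed

lemma almost_contact_metric_g_xi:
  assumes "almost_contact_metric \<phi> \<xi> \<eta> g"
  shows "g \<xi> y = \<eta> y" "g y \<xi> = \<eta> y"
proof -
  have b: "bilinear g" and e: "\<eta> \<xi> = 1" and s: "\<And>x y. g x y = g y x"
    and gg: "\<And>x y. g (\<phi> x) (\<phi> y) = g x y - \<eta> x * \<eta> y"
    using assms unfolding almost_contact_metric_def by auto
  have "g (\<phi> \<xi>) (\<phi> y) = 0"
    using almost_contact_metric_phi_xi[OF assms] bilinear_lzero[OF b] by simp
  thus "g \<xi> y = \<eta> y" using gg[of \<xi> y] e by simp
  thus "g y \<xi> = \<eta> y" using s by simp
qed

lemma lie_algebra_anticomm:
  assumes "lie_algebra br"
  shows "br y x = - br x y"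
proof -
  have b: "bilinear br" and a: "\<And>x. br x x = 0" using assms unfolding lie_algebra_def by auto
  have "br (x + y) (x + y) = 0" using a by simp
  hence "br x x + br x y + (br y x + br y y) = 0"
    by (simp add: bilinear_ladd[OF b] bilinear_radd[OF b] algebra_simps)
  thus ?thesis using a by (simp add: eq_neg_iff_add_eq_0 add.commute)
qed

lemma acok_iso_restrict_ak_iso:
  assumes "acok_iso br1 \<phi>1 \<xi>1 \<eta>1 g1 br2 \<phi>2 \<xi>2 \<eta>2 g2 \<Psi>"
  shows "ak_iso br1 {x. \<eta>1 x = 0} \<phi>1 g1 br2 {x. \<eta>2 x = 0} \<phi>2 g2 \<Psi>"
    and "\<forall>x\<in>{x. \<eta>1 x = 0}. \<Psi> (br1 \<xi>1 x) = br2 \<xi>2 (\<Psi> x)"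
proof -
  have l: "linear \<Psi>" and bj: "bij \<Psi>" and br: "\<And>x y. \<Psi> (br1 x y) = br2 (\<Psi> x) (\<Psi> y)"
    and et: "\<And>x. \<eta>2 (\<Psi> x) = \<eta>1 x" and xi: "\<Psi> \<xi>1 = \<xi>2"
    using assms unfolding acok_iso_def by auto
  have "\<Psi> ` {x. \<eta>1 x = 0} = {x. \<eta>2 x = 0}"
    using et bj by (auto simp: image_iff) (metis bij_pointE)
  hence "bij_betw \<Psi> {x. \<eta>1 x = 0} {x. \<eta>2 x = 0}"
    using bj unfolding bij_betw_def bij_def by (blast intro: inj_on_subset)
  then show "ak_iso br1 {x. \<eta>1 x = 0} \<phi>1 g1 br2 {x. \<eta>2 x = 0} \<phi>2 g2 \<Psi>"
    using assms linear_add[OF l] linear_scale[OF l] unfolding ak_iso_def acok_iso_def by auto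
  show "\<forall>x\<in>{x. \<eta>1 x = 0}. \<Psi> (br1 \<xi>1 x) = br2 \<xi>2 (\<Psi> x)" using br xi by simp
qed

locale horizontal_iso =
  fixes \<eta>1 :: "'a::real_vector \<Rightarrow> real" and \<xi>1 :: 'a
    and \<eta>2 :: "'b::real_vector \<Rightarrow> real" and \<xi>2 :: 'b
    and \<psi> :: "'a \<Rightarrow> 'b"
  assumes linear_eta1: "linear \<eta>1" and eta1_xi1: "\<eta>1 \<xi>1 = 1"
    and linear_eta2: "linear \<eta>2" and eta2_xi2: "\<eta>2 \<xi>2 = 1"
    and psi_add: "\<And>x y. \<eta>1 x = 0 \<Longrightarrow> \<eta>1 y = 0 \<Longrightarrow> \<psi> (x + y) = \<psi> x + \<psi> y"
    and psi_scale: "\<And>c x. \<eta>1 x = 0 \<Longrightarrow> \<psi> (c *\<^sub>R x) = c *\<^sub>R \<psi> x"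
    and psi_bij: "bij_betw \<psi> {x. \<eta>1 x = 0} {x. \<eta>2 x = 0}"
begin

definition extension :: "'a \<Rightarrow> 'b" where
  "extension x = \<psi> (x - \<eta>1 x *\<^sub>R \<xi>1) + \<eta>1 x *\<^sub>R \<xi>2"

lemma vertical_split:
  obtains h c where "\<eta>1 h = 0" "x = h + c *\<^sub>R \<xi>1"
proof
  show "\<eta>1 (x - \<eta>1 x *\<^sub>R \<xi>1) = 0"
    by (simp add: linear_diff[OF linear_eta1] linear_scale[OF linear_eta1] eta1_xi1)
  show "x = (x - \<eta>1 x *\<^sub>R \<xi>1) + \<eta>1 x *\<^sub>R \<xi>1" by simp
qed

lemma eta1_split [simp]: "\<eta>1 h = 0 \<Longrightarrow> \<eta>1 (h + c *\<^sub>R \<xi>1) = c"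
  by (simp add: linear_add[OF linear_eta1] linear_scale[OF linear_eta1] eta1_xi1)

lemma extension_split [simp]: "\<eta>1 h = 0 \<Longrightarrow> extension (h + c *\<^sub>R \<xi>1) = \<psi> h + c *\<^sub>R \<xi>2"
  unfolding extension_def by simp

lemma psi_horizontal: "\<eta>1 h = 0 \<Longrightarrow> \<eta>2 (\<psi> h) = 0"
  using psi_bij unfolding bij_betw_def by auto

lemma psi_lincomb:
  assumes "\<eta>1 u = 0" "\<eta>1 v = 0" "\<eta>1 w = 0"
  shows "\<psi> (u + c *\<^sub>R v + d *\<^sub>R w) = \<psi> u + c *\<^sub>R \<psi> v + d *\<^sub>R \<psi> w"
proof -
  have "\<eta>1 (c *\<^sub>R v) = 0" "\<eta>1 (d *\<^sub>R w) = 0" "\<eta>1 (u + c *\<^sub>R v) = 0"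
    using assms by (simp_all add: linear_add[OF linear_eta1] linear_scale[OF linear_eta1])
  thus ?thesis using assms by (simp add: psi_add psi_scale)
qed

lemma extension_horizontal: "\<eta>1 h = 0 \<Longrightarrow> extension h = \<psi> h"
  using extension_split[of h 0] by simp

lemma extension_xi: "extension \<xi>1 = \<xi>2"
  using extension_split[of 0 1] psi_scale[of 0 0] linear_0[OF linear_eta1] by simp

lemma eta2_extension: "\<eta>2 (extension x) = \<eta>1 x"
  by (simp add: extension_def linear_add[OF linear_eta2] linear_scale[OF linear_eta2]
      psi_horizontal eta2_xi2 linear_diff[OF linear_eta1] linear_scale[OF linear_eta1] eta1_xi1)

lemma linear_extension: "linear extension"
proof (rule linearI)
  fix x y
  obtain h a k b where h: "\<eta>1 h = 0" and x: "x = h + a *\<^sub>R \<xi>1"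
    and k: "\<eta>1 k = 0" and y: "y = k + b *\<^sub>R \<xi>1"
    using vertical_split by metis
  have "\<eta>1 (h + k) = 0" using h k by (simp add: linear_add[OF linear_eta1])
  moreover have "x + y = (h + k) + (a + b) *\<^sub>R \<xi>1" using x y by (simp add: algebra_simps)
  ultimately have "extension (x + y) = \<psi> (h + k) + (a + b) *\<^sub>R \<xi>2" by simp
  thus "extension (x + y) = extension x + extension y"
    using h k x y by (simp add: psi_add algebra_simps)
  fix c
  have "\<eta>1 (c *\<^sub>R h) = 0" using h by (simp add: linear_scale[OF linear_eta1])
  moreover have "c *\<^sub>R x = c *\<^sub>R h + (c * a) *\<^sub>R \<xi>1" using x by (simp add: algebra_simps)
  ultimately have "extension (c *\<^sub>R x) = \<psi> (c *\<^sub>R h) + (c * a) *\<^sub>R \<xi>2" by simp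
  thus "extension (c *\<^sub>R x) = c *\<^sub>R extension x"
    using h x by (simp add: psi_scale algebra_simps)
qed

lemma bij_extension: "bij extension"
proof (rule bijI)
  show "inj extension"
  proof (rule injI)
    fix x y assume eq: "extension x = extension y"
    obtain h a k b where h: "\<eta>1 h = 0" and x: "x = h + a *\<^sub>R \<xi>1"
      and k: "\<eta>1 k = 0" and y: "y = k + b *\<^sub>R \<xi>1"
      using vertical_split by metis
    have "a = b" using eta2_extension[of x] eta2_extension[of y] eq h k x y by simp
    hence "\<psi> h = \<psi> k" using eq h k x y by simp
    hence "h = k" using psi_bij h k unfolding bij_betw_def inj_on_def by blast
    thus "x = y" using x y \<open>a = b\<close> by simp
  qed
  show "surj extension" unfolding surj_def
  proof
    fix z
    have "\<eta>2 (z - \<eta>2 z *\<^sub>R \<xi>2) = 0"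
      by (simp add: linear_diff[OF linear_eta2] linear_scale[OF linear_eta2] eta2_xi2)
    then obtain h where "\<eta>1 h = 0" "\<psi> h = z - \<eta>2 z *\<^sub>R \<xi>2"
      using psi_bij unfolding bij_betw_def by (metis (mono_tags, lifting) imageE mem_Collect_eq)
    hence "extension (h + \<eta>2 z *\<^sub>R \<xi>1) = z" by simp
    thus "\<exists>x. z = extension x" by metis
  qed
qed

lemma extension_commute:
  assumes "linear \<phi>1" "\<phi>1 \<xi>1 = 0" "\<And>x. \<eta>1 (\<phi>1 x) = 0" "linear \<phi>2" "\<phi>2 \<xi>2 = 0"
    and "\<And>h. \<eta>1 h = 0 \<Longrightarrow> \<psi> (\<phi>1 h) = \<phi>2 (\<psi> h)"
  shows "extension (\<phi>1 x) = \<phi>2 (extension x)"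
proof -
  obtain h c where h: "\<eta>1 h = 0" and x: "x = h + c *\<^sub>R \<xi>1" using vertical_split by metis
  have "extension (\<phi>1 x) = extension (\<phi>1 h)"
    using x assms(1,2) by (simp add: linear_add linear_scale)
  also have "\<dots> = \<phi>2 (\<psi> h)" using h assms(3,6) by (simp add: extension_horizontal)
  also have "\<dots> = \<phi>2 (extension x)"
    using h x assms(4,5) by (simp add: linear_add linear_scale)
  finally show ?thesis .
qed

lemma extension_preserves_form:
  assumes "bilinear g1" "\<And>y. g1 \<xi>1 y = \<eta>1 y" "\<And>y. g1 y \<xi>1 = \<eta>1 y"
    and "bilinear g2" "\<And>y. g2 \<xi>2 y = \<eta>2 y" "\<And>y. g2 y \<xi>2 = \<eta>2 y"
    and "\<And>h k. \<eta>1 h = 0 \<Longrightarrow> \<eta>1 k = 0 \<Longrightarrow> g2 (\<psi> h) (\<psi> k) = g1 h k"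
  shows "g2 (extension x) (extension y) = g1 x y"
proof -
  obtain h a k b where h: "\<eta>1 h = 0" and x: "x = h + a *\<^sub>R \<xi>1"
    and k: "\<eta>1 k = 0" and y: "y = k + b *\<^sub>R \<xi>1"
    using vertical_split by metis
  have "g2 (extension x) (extension y) = g2 (\<psi> h) (\<psi> k) + a * b"
    using h k x y assms(4-6)
    by (simp add: bilinear_ladd bilinear_radd bilinear_lmul bilinear_rmul psi_horizontal eta2_xi2
        linear_add[OF linear_eta2] linear_scale[OF linear_eta2])
  also have "\<dots> = g1 x y"
    using h k x y assms(1-3,7)
    by (simp add: bilinear_ladd bilinear_radd bilinear_lmul bilinear_rmul eta1_xi1
        linear_add[OF linear_eta1] linear_scale[OF linear_eta1])
  finally show ?thesis .
qed

lemma extension_preserves_bracket: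
  assumes L1: "lie_algebra br1" and L2: "lie_algebra br2"
    and closed: "\<And>x y. \<eta>1 (br1 x y) = 0"
    and hom: "\<And>h k. \<eta>1 h = 0 \<Longrightarrow> \<eta>1 k = 0 \<Longrightarrow> \<psi> (br1 h k) = br2 (\<psi> h) (\<psi> k)"
    and ad: "\<And>h. \<eta>1 h = 0 \<Longrightarrow> \<psi> (br1 \<xi>1 h) = br2 \<xi>2 (\<psi> h)"
  shows "extension (br1 x y) = br2 (extension x) (extension y)"
proof -
  have b1: "bilinear br1" and a1: "br1 \<xi>1 \<xi>1 = 0" using L1 unfolding lie_algebra_def by auto
  have b2: "bilinear br2" and a2: "br2 \<xi>2 \<xi>2 = 0" using L2 unfolding lie_algebra_def by auto
  obtain h a k b where h: "\<eta>1 h = 0" and x: "x = h + a *\<^sub>R \<xi>1"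
    and k: "\<eta>1 k = 0" and y: "y = k + b *\<^sub>R \<xi>1"
    using vertical_split by metis
  have "br1 x y = br1 h k + (- b) *\<^sub>R br1 \<xi>1 h + a *\<^sub>R br1 \<xi>1 k"
    using x y a1 lie_algebra_anticomm[OF L1, of \<xi>1 h]
    by (simp add: bilinear_ladd[OF b1] bilinear_radd[OF b1] bilinear_lmul[OF b1]
        bilinear_rmul[OF b1])
  hence "extension (br1 x y) = \<psi> (br1 h k + (- b) *\<^sub>R br1 \<xi>1 h + a *\<^sub>R br1 \<xi>1 k)"
    using closed by (metis extension_horizontal)
  also have "\<dots> = br2 (\<psi> h) (\<psi> k) + (- b) *\<^sub>R br2 \<xi>2 (\<psi> h) + a *\<^sub>R br2 \<xi>2 (\<psi> k)"
    unfolding psi_lincomb[OF closed closed closed] using h k by (simp add: hom ad)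
  also have "\<dots> = br2 (extension x) (extension y)"
    using h k x y a2 lie_algebra_anticomm[OF L2, of \<xi>2 "\<psi> h"]
    by (simp add: bilinear_ladd[OF b2] bilinear_radd[OF b2] bilinear_lmul[OF b2]
        bilinear_rmul[OF b2])
  finally show ?thesis .
qed

end

lemma ak_iso_extend_acok_iso:
  assumes L1: "lie_algebra br1" and L2: "lie_algebra br2"
    and A1: "almost_contact_metric \<phi>1 \<xi>1 \<eta>1 g1"
    and A2: "almost_contact_metric \<phi>2 \<xi>2 \<eta>2 g2"
    and closed: "\<And>x y. \<eta>1 (br1 x y) = 0"
    and iso: "ak_iso br1 {x. \<eta>1 x = 0} \<phi>1 g1 br2 {x. \<eta>2 x = 0} \<phi>2 g2 \<psi>"
    and ad: "\<forall>x\<in>{x. \<eta>1 x = 0}. \<psi> (br1 \<xi>1 x) = br2 \<xi>2 (\<psi> x)"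
  shows "\<exists>\<Psi>. acok_iso br1 \<phi>1 \<xi>1 \<eta>1 g1 br2 \<phi>2 \<xi>2 \<eta>2 g2 \<Psi>"
proof -
  interpret horizontal_iso \<eta>1 \<xi>1 \<eta>2 \<xi>2 \<psi>
    using A1 A2 iso unfolding horizontal_iso_def almost_contact_metric_def ak_iso_def by auto
  have "acok_iso br1 \<phi>1 \<xi>1 \<eta>1 g1 br2 \<phi>2 \<xi>2 \<eta>2 g2 extension"
    unfolding acok_iso_def
  proof (intro conjI allI linear_extension bij_extension eta2_extension extension_xi)
    show "extension (br1 x y) = br2 (extension x) (extension y)" for x y
      using extension_preserves_bracket[OF L1 L2 closed] iso ad unfolding ak_iso_def by simp
    show "extension (\<phi>1 x) = \<phi>2 (extension x)" for x
      using A1 A2 iso unfolding almost_contact_metric_def ak_iso_def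
      by (intro extension_commute almost_contact_metric_phi_xi[OF A1]
          almost_contact_metric_phi_xi[OF A2]) auto
    show "g2 (extension x) (extension y) = g1 x y" for x y
      using extension_preserves_form almost_contact_metric_g_xi[OF A1]
        almost_contact_metric_g_xi[OF A2] A1 A2 iso
      unfolding almost_contact_metric_def ak_iso_def by simp
  qed
  thus ?thesis by blast
qed

theorem mainTheorem11:
  fixes \<alpha> :: real and n1 n2 :: nat
    and br1 :: "'a::euclidean_space \<Rightarrow> 'a \<Rightarrow> 'a" and \<phi>1 :: "'a \<Rightarrow> 'a" and \<xi>1 :: 'a
    and \<eta>1 :: "'a \<Rightarrow> real" and g1 :: "'a \<Rightarrow> 'a \<Rightarrow> real"
    and br2 :: "'b::euclidean_space \<Rightarrow> 'b \<Rightarrow> 'b" and \<phi>2 :: "'b \<Rightarrow> 'b" and \<xi>2 :: 'b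
    and \<eta>2 :: "'b \<Rightarrow> real" and g2 :: "'b \<Rightarrow> 'b \<Rightarrow> real"
  assumes "almost_alpha_cokahler \<alpha> n1 br1 \<phi>1 \<xi>1 \<eta>1 g1"
    and "almost_alpha_cokahler \<alpha> n2 br2 \<phi>2 \<xi>2 \<eta>2 g2"
    and "\<forall>x. lie_deriv_phi br1 \<xi>1 \<phi>1 x = 0"
    and "\<forall>x. lie_deriv_phi br2 \<xi>2 \<phi>2 x = 0"
  shows "(\<exists>\<Psi>. acok_iso br1 \<phi>1 \<xi>1 \<eta>1 g1 br2 \<phi>2 \<xi>2 \<eta>2 g2 \<Psi>) \<longleftrightarrow>
         (\<exists>\<psi>. ak_iso br1 {x. \<eta>1 x = 0} \<phi>1 g1 br2 {x. \<eta>2 x = 0} \<phi>2 g2 \<psi> \<and>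
               (\<forall>x\<in>{x. \<eta>1 x = 0}. \<psi> (br1 \<xi>1 x) = br2 \<xi>2 (\<psi> x)))"
proof
  assume "\<exists>\<Psi>. acok_iso br1 \<phi>1 \<xi>1 \<eta>1 g1 br2 \<phi>2 \<xi>2 \<eta>2 g2 \<Psi>"
  then obtain \<Psi> where \<Psi>: "acok_iso br1 \<phi>1 \<xi>1 \<eta>1 g1 br2 \<phi>2 \<xi>2 \<eta>2 g2 \<Psi>" ..
  thus "\<exists>\<psi>. ak_iso br1 {x. \<eta>1 x = 0} \<phi>1 g1 br2 {x. \<eta>2 x = 0} \<phi>2 g2 \<psi> \<and>
          (\<forall>x\<in>{x. \<eta>1 x = 0}. \<psi> (br1 \<xi>1 x) = br2 \<xi>2 (\<psi> x))"
    using acok_iso_restrict_ak_iso[OF \<Psi>] by blast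
next
  assume "\<exists>\<psi>. ak_iso br1 {x. \<eta>1 x = 0} \<phi>1 g1 br2 {x. \<eta>2 x = 0} \<phi>2 g2 \<psi> \<and>
            (\<forall>x\<in>{x. \<eta>1 x = 0}. \<psi> (br1 \<xi>1 x) = br2 \<xi>2 (\<psi> x))"
  then obtain \<psi> where iso: "ak_iso br1 {x. \<eta>1 x = 0} \<phi>1 g1 br2 {x. \<eta>2 x = 0} \<phi>2 g2 \<psi>"
    and ad: "\<forall>x\<in>{x. \<eta>1 x = 0}. \<psi> (br1 \<xi>1 x) = br2 \<xi>2 (\<psi> x)" by blast
  have "lie_algebra br1" "lie_algebra br2"
    and "almost_contact_metric \<phi>1 \<xi>1 \<eta>1 g1" "almost_contact_metric \<phi>2 \<xi>2 \<eta>2 g2"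
    and "\<And>x y. \<eta>1 (br1 x y) = 0"
    using assms(1,2) unfolding almost_alpha_cokahler_def d1_def by auto
  from ak_iso_extend_acok_iso[OF this iso ad]
  show "\<exists>\<Psi>. acok_iso br1 \<phi>1 \<xi>1 \<eta>1 g1 br2 \<phi>2 \<xi>2 \<eta>2 g2 \<Psi>" .
qed

end
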